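(* Under the setting of the context, for every $\boldsymbol{\alpha}\in\mathbb{R}^n$ and $\boldsymbol{\beta}\in\mathbb{R}^{dn}$, the function $$f_{\boldsymbol{\alpha},\boldsymbol{\beta}}=\sum_{i=1}^n\alpha_i k_{\mathbf{x}^i}+\sum_{i=1}^n\sum_{a=1}^d\beta_{ai}[\partial_a k_{\mathbf{x}^i}]$$ satisfies $\widehat{\mathcal{L}}(f_{\boldsymbol{\alpha},\boldsymbol{\beta}})=\mathcal{J}_1(\boldsymbol{\alpha},\boldsymbol{\beta})$, $\widehat{\mathcal{R}}(f_{\boldsymbol{\alpha},\boldsymbol{\beta}})=\mathcal{J}_2(\boldsymbol{\alpha},\boldsymbol{\beta})$ and $\|f_{\boldsymbol{\alpha},\boldsymbol{\beta}}\|_{\mathcal{F}}^2=\mathcal{J}_3(\boldsymbol{\alpha},\boldsymbol{\beta})$, where $$\mathcal{J}_1=\tfrac1n\|\mathbf{y}-\mathbf{K}\boldsymbol{\alpha}-\mathbf{D}^T\boldsymbol{\beta}\|_2^2,\qquad \mathcal{J}_3=\boldsymbol{\alpha}^T\mathbf{K}\boldsymbol{\alpha}+2\boldsymbol{\alpha}^T\mathbf{D}^T\boldsymbol{\beta}+\boldsymbol{\beta}^T\mathbf{L}\boldsymbol{\beta},$$ and $\mathcal{J}_2$ depends on the regularizer: for $\widehat{\mathcal{R}}^L$: $\mathcal{J}_2=\frac1{\sqrt n}\sum_{a=1}^d\|\mathbf{D}^a\boldsymbol{\alpha}+\mathbf{L}^a\boldsymbol{\beta}\|_2$; for $\widehat{\mathcal{R}}^{GL}$: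 $\mathcal{J}_2=\frac1{\sqrt n}\sum_{g=1}^G p_g\|\ddot{\mathbf{D}}^g\boldsymbol{\alpha}+\ddot{\mathbf{L}}^g\boldsymbol{\beta}\|_2$; for $\widehat{\mathcal{R}}^{EN}$: $\mathcal{J}_2=\frac{\mu}{\sqrt n}\sum_{a=1}^d\|\mathbf{D}^a\boldsymbol{\alpha}+\mathbf{L}^a\boldsymbol{\beta}\|_2+\frac{1-\mu}{n}\sum_{a=1}^d\|\mathbf{D}^a\boldsymbol{\alpha}+\mathbf{L}^a\boldsymbol{\beta}\|_2^2$. Consequently the problem $\min_{f\in\mathcal{F}}\widehat{\mathcal{L}}(f)+\tau\widehat{\mathcal{R}}(f)+\nu\|f\|_{\mathcal{F}}^2$ ($\tau,\nu\ge0$) is equivalent to $\min_{\boldsymbol{\alpha},\boldsymbol{\beta}}\mathcal{J}_1+\tau\mathcal{J}_2+\nu\mathcal{J}_3$: both have the same infimum, and $(\boldsymbol{\alpha}^*,\boldsymbol{\beta}^* )$ minimises the latter if and only if $f_{\boldsymbol{\alpha}^*,\boldsymbol{\beta}^*}$ minimises the former.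
   Context: Setting: $\mathcal{X}\subseteq\mathbb{R}^d$ open; $k$ a symmetric positive semidefinite kernel in $C^2(\mathcal{X}\times\mathcal{X})$ with RKHS $\mathcal{F}$; $k_{\mathbf{x}}(\mathbf{x}')=k(\mathbf{x},\mathbf{x}')$; $[\partial_a k_{\mathbf{x}}](\mathbf{x}')=\frac{\partial}{\partial x_a}k(\mathbf{x},\mathbf{x}')$ (derivative in the first argument). These satisfy $\langle k_{\mathbf{x}},f\rangle_{\mathcal{F}}=f(\mathbf{x})$, $[\partial_a k_{\mathbf{x}}]\in\mathcal{F}$, $\langle[\partial_a k_{\mathbf{x}}],f\rangle_{\mathcal{F}}=\partial_a f(\mathbf{x})$. Data $(\mathbf{x}^i,y^i)\in\mathcal{X}\times\mathbb{R}$, $i=1,\dots,n$, $\mathbf{y}=(y^1,\dots,y^n)^T$. Loss and regularizers: $\widehat{\mathcal{L}}(f)=\frac1n\sum_i(y^i-f(\mathbf{x}^i))^2$; $\|\partial_a f\|_{2_n}=\sqrt{\frac1n\sum_i|\partial_a f(\mathbf{x}^i)|^2}$; $\widehat{\mathcal{R}}^L(f)=\sum_a\|\partial_a f\|_{2_n}$; for a partition of $\{1,\dots,d\}$ into groups $g=1,\dots,G$ with $p_g$ elements, $\widehat{\mathcal{R}}^{GL}(f)=\sum_g p_g\sqrt{\sum_{a\in g}\|\partial_af\|_{2_n}^2}$; for $\mu\in[0,1]$, $\widehat{\mathcal{R}}^{EN}(f)=\mu\sum_a\|\partial_af\|_{2_n}+(1-\mu)\sum_a\|\partial_af\|_{2_n}^2$.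 Matrices: $\boldsymbol{\alpha}=(\alpha_1,\dots,\alpha_n)^T$; $\boldsymbol{\beta}=(\beta_{11},\dots,\beta_{1n},\beta_{21},\dots,\beta_{dn})^T$. $\mathbf{K}\in\mathbb{R}^{n\times n}$, $K_{ij}=k(\mathbf{x}^i,\mathbf{x}^j)$. $\mathbf{D}^a\in\mathbb{R}^{n\times n}$, $D^a_{ij}=[\partial_a k_{\mathbf{x}^i}](\mathbf{x}^j)$. $\mathbf{L}^{ab}\in\mathbb{R}^{n\times n}$, $L^{ab}_{ij}=\frac{\partial^2}{\partial s_a\partial r_b}k(\mathbf{s},\mathbf{r})\big|_{\mathbf{s}=\mathbf{x}^i,\mathbf{r}=\mathbf{x}^j}$. $\mathbf{D}\in\mathbb{R}^{dn\times n}$ is the vertical stack of $\mathbf{D}^1,\dots,\mathbf{D}^d$; $\mathbf{L}^a=[\mathbf{L}^{a1}\cdots\mathbf{L}^{ad}]\in\mathbb{R}^{n\times dn}$; $\mathbf{L}\in\mathbb{R}^{dn\times dn}$ is the vertical stack of $\mathbf{L}^1,\dots,\mathbf{L}^d$. For a group $g=\{g_1,\dots,g_{p_g}\}$, $\ddot{\mathbf{D}}^g$ is the vertical stack of $\mathbf{D}^{g_1},\dots,\mathbf{D}^{g_{p_g}}$ and $\ddot{\mathbf{L}}^g$ the vertical stack of $\mathbf{L}^{g_1},\dots,\mathbf{L}^{g_{p_g}}$. *)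

theory Defs
  imports "HOL-Analysis.Analysis" "HOL-Library.Disjoint_Sets"
begin

text \<open>Coordinates of \<open>\<real>^d\<close> are indexed by a finite type \<open>'d\<close>; data points are indexed by
  \<open>i < n\<close>; \<open>\<alpha> :: nat \<Rightarrow> real\<close> (entries \<open>i < n\<close>), \<open>\<beta> :: 'd \<Rightarrow> nat \<Rightarrow> real\<close> with \<open>\<beta> a i = \<beta>_{ai}\<close>.\<close>

definition partial :: "'d::finite \<Rightarrow> (real^'d \<Rightarrow> real) \<Rightarrow> real^'d \<Rightarrow> real" where
  "partial a g x = deriv (\<lambda>t. g (x + t *\<^sub>R axis a 1)) 0"

definition C2_on :: "'a::real_normed_vector set \<Rightarrow> ('a \<Rightarrow> real) \<Rightarrow> bool" where
  "C2_on S g \<longleftrightarrow> (\<exists>(g' :: 'a \<Rightarrow> 'a \<Rightarrow>\<^sub>L real) (g'' :: 'a \<Rightarrow> 'a \<Rightarrow>\<^sub>L ('a \<Rightarrow>\<^sub>L real)).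
      (\<forall>z\<in>S. (g has_derivative blinfun_apply (g' z)) (at z)) \<and>
      (\<forall>z\<in>S. (g' has_derivative blinfun_apply (g'' z)) (at z)) \<and>
      continuous_on S g'')"

definition sym_psd_kernel :: "'a set \<Rightarrow> ('a \<Rightarrow> 'a \<Rightarrow> real) \<Rightarrow> bool" where
  "sym_psd_kernel X k \<longleftrightarrow> (\<forall>s\<in>X. \<forall>r\<in>X. k s r = k r s) \<and>
     (\<forall>(m::nat) (z::nat \<Rightarrow> 'a) (c::nat \<Rightarrow> real). (\<forall>i<m. z i \<in> X) \<longrightarrow>
        0 \<le> (\<Sum>i<m. \<Sum>j<m. c i * c j * k (z i) (z j)))"

text \<open>The RKHS \<open>\<F>\<close> of \<open>k\<close> is modelled as a Hilbert space type \<open>'h\<close> whose elements are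
  identified (injectively) with functions on \<open>X\<close> via \<open>ev\<close>; \<open>kx x = k_x\<close>, \<open>dk a x = \<partial>_a k_x\<close>.\<close>
definition is_rkhs :: "(real^'d::finite) set \<Rightarrow> (real^'d \<Rightarrow> real^'d \<Rightarrow> real)
    \<Rightarrow> ('h::real_inner \<Rightarrow> real^'d \<Rightarrow> real) \<Rightarrow> (real^'d \<Rightarrow> 'h) \<Rightarrow> ('d \<Rightarrow> real^'d \<Rightarrow> 'h) \<Rightarrow> bool" where
  "is_rkhs X k ev kx dk \<longleftrightarrow>
     (\<forall>f g. (\<forall>x\<in>X. ev f x = ev g x) \<longrightarrow> f = g) \<and>
     (\<forall>x\<in>X. \<forall>x'\<in>X. ev (kx x) x' = k x x') \<and>
     (\<forall>x\<in>X. \<forall>f. inner (kx x) f = ev f x) \<and>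
     (\<forall>a. \<forall>x\<in>X. \<forall>x'\<in>X. ev (dk a x) x' = partial a (\<lambda>s. k s x') x) \<and>
     (\<forall>a. \<forall>x\<in>X. \<forall>f. inner (dk a x) f = partial a (ev f) x)"

definition f_ab :: "(real^'d::finite \<Rightarrow> 'h::real_vector) \<Rightarrow> ('d \<Rightarrow> real^'d \<Rightarrow> 'h) \<Rightarrow> nat
    \<Rightarrow> (nat \<Rightarrow> real^'d) \<Rightarrow> (nat \<Rightarrow> real) \<Rightarrow> ('d \<Rightarrow> nat \<Rightarrow> real) \<Rightarrow> 'h" where
  "f_ab kx dk n xs \<alpha> \<beta> = (\<Sum>i<n. \<alpha> i *\<^sub>R kx (xs i)) + (\<Sum>i<n. \<Sum>a\<in>UNIV. \<beta> a i *\<^sub>R dk a (xs i))"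

definition emp_loss :: "('h \<Rightarrow> real^'d \<Rightarrow> real) \<Rightarrow> nat \<Rightarrow> (nat \<Rightarrow> real^'d) \<Rightarrow> (nat \<Rightarrow> real) \<Rightarrow> 'h \<Rightarrow> real" where
  "emp_loss ev n xs ys f = (\<Sum>i<n. (ys i - ev f (xs i))^2) / real n"

definition emp_pnorm :: "('h \<Rightarrow> real^'d::finite \<Rightarrow> real) \<Rightarrow> nat \<Rightarrow> (nat \<Rightarrow> real^'d) \<Rightarrow> 'd \<Rightarrow> 'h \<Rightarrow> real" where
  "emp_pnorm ev n xs a f = sqrt ((\<Sum>i<n. (partial a (ev f) (xs i))^2) / real n)"

definition R_L :: "('h \<Rightarrow> real^'d::finite \<Rightarrow> real) \<Rightarrow> nat \<Rightarrow> (nat \<Rightarrow> real^'d) \<Rightarrow> 'h \<Rightarrow> real" where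
  "R_L ev n xs f = (\<Sum>a\<in>UNIV. emp_pnorm ev n xs a f)"

definition R_GL :: "('h \<Rightarrow> real^'d::finite \<Rightarrow> real) \<Rightarrow> nat \<Rightarrow> (nat \<Rightarrow> real^'d) \<Rightarrow> 'd set set \<Rightarrow> 'h \<Rightarrow> real" where
  "R_GL ev n xs P f = (\<Sum>g\<in>P. real (card g) * sqrt (\<Sum>a\<in>g. (emp_pnorm ev n xs a f)^2))"

definition R_EN :: "('h \<Rightarrow> real^'d::finite \<Rightarrow> real) \<Rightarrow> nat \<Rightarrow> (nat \<Rightarrow> real^'d) \<Rightarrow> real \<Rightarrow> 'h \<Rightarrow> real" where
  "R_EN ev n xs \<mu> f = \<mu> * (\<Sum>a\<in>UNIV. emp_pnorm ev n xs a f) + (1 - \<mu>) * (\<Sum>a\<in>UNIV. (emp_pnorm ev n xs a f)^2)"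

text \<open>Matrix entries (indices from 0).\<close>
definition Kmat :: "('x \<Rightarrow> 'x \<Rightarrow> real) \<Rightarrow> (nat \<Rightarrow> 'x) \<Rightarrow> nat \<Rightarrow> nat \<Rightarrow> real" where
  "Kmat k xs i j = k (xs i) (xs j)"

definition Dmat :: "(real^'d::finite \<Rightarrow> real^'d \<Rightarrow> real) \<Rightarrow> (nat \<Rightarrow> real^'d) \<Rightarrow> 'd \<Rightarrow> nat \<Rightarrow> nat \<Rightarrow> real" where
  "Dmat k xs a i j = partial a (\<lambda>s. k s (xs j)) (xs i)"

definition Lmat :: "(real^'d::finite \<Rightarrow> real^'d \<Rightarrow> real) \<Rightarrow> (nat \<Rightarrow> real^'d) \<Rightarrow> 'd \<Rightarrow> 'd \<Rightarrow> nat \<Rightarrow> nat \<Rightarrow> real" where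
  "Lmat k xs a b i j = partial a (\<lambda>s. partial b (\<lambda>r. k s r) (xs j)) (xs i)"

definition J1 :: "(real^'d::finite \<Rightarrow> real^'d \<Rightarrow> real) \<Rightarrow> nat \<Rightarrow> (nat \<Rightarrow> real^'d) \<Rightarrow> (nat \<Rightarrow> real)
    \<Rightarrow> (nat \<Rightarrow> real) \<Rightarrow> ('d \<Rightarrow> nat \<Rightarrow> real) \<Rightarrow> real" where
  "J1 k n xs ys \<alpha> \<beta> = (\<Sum>j<n. (ys j - (\<Sum>i<n. Kmat k xs j i * \<alpha> i)
       - (\<Sum>a\<in>UNIV. \<Sum>i<n. Dmat k xs a i j * \<beta> a i))^2) / real n"

definition J3 :: "(real^'d::finite \<Rightarrow> real^'d \<Rightarrow> real) \<Rightarrow> nat \<Rightarrow> (nat \<Rightarrow> real^'d)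
    \<Rightarrow> (nat \<Rightarrow> real) \<Rightarrow> ('d \<Rightarrow> nat \<Rightarrow> real) \<Rightarrow> real" where
  "J3 k n xs \<alpha> \<beta> = (\<Sum>i<n. \<Sum>j<n. \<alpha> i * Kmat k xs i j * \<alpha> j)
     + 2 * (\<Sum>a\<in>UNIV. \<Sum>i<n. (\<Sum>j<n. Dmat k xs a i j * \<alpha> j) * \<beta> a i)
     + (\<Sum>a\<in>UNIV. \<Sum>i<n. \<Sum>b\<in>UNIV. \<Sum>j<n. \<beta> a i * Lmat k xs a b i j * \<beta> b j)"

definition gradvec :: "(real^'d::finite \<Rightarrow> real^'d \<Rightarrow> real) \<Rightarrow> nat \<Rightarrow> (nat \<Rightarrow> real^'d)
    \<Rightarrow> (nat \<Rightarrow> real) \<Rightarrow> ('d \<Rightarrow> nat \<Rightarrow> real) \<Rightarrow> 'd \<Rightarrow> nat \<Rightarrow> real" where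
  "gradvec k n xs \<alpha> \<beta> a j = (\<Sum>i<n. Dmat k xs a j i * \<alpha> i) + (\<Sum>b\<in>UNIV. \<Sum>i<n. Lmat k xs a b j i * \<beta> b i)"

definition gnorm :: "(real^'d::finite \<Rightarrow> real^'d \<Rightarrow> real) \<Rightarrow> nat \<Rightarrow> (nat \<Rightarrow> real^'d)
    \<Rightarrow> (nat \<Rightarrow> real) \<Rightarrow> ('d \<Rightarrow> nat \<Rightarrow> real) \<Rightarrow> 'd \<Rightarrow> real" where
  "gnorm k n xs \<alpha> \<beta> a = sqrt (\<Sum>j<n. (gradvec k n xs \<alpha> \<beta> a j)^2)"

definition J2_L :: "(real^'d::finite \<Rightarrow> real^'d \<Rightarrow> real) \<Rightarrow> nat \<Rightarrow> (nat \<Rightarrow> real^'d)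
    \<Rightarrow> (nat \<Rightarrow> real) \<Rightarrow> ('d \<Rightarrow> nat \<Rightarrow> real) \<Rightarrow> real" where
  "J2_L k n xs \<alpha> \<beta> = (1 / sqrt (real n)) * (\<Sum>a\<in>UNIV. gnorm k n xs \<alpha> \<beta> a)"

text \<open>\<open>\<parallel>\<ddot>D^g \<alpha> + \<ddot>L^g \<beta>\<parallel>_2\<close> is the Euclidean norm of the stacked vectors \<open>D^a \<alpha> + L^a \<beta>\<close>, \<open>a \<in> g\<close>.\<close>
definition J2_GL :: "(real^'d::finite \<Rightarrow> real^'d \<Rightarrow> real) \<Rightarrow> nat \<Rightarrow> (nat \<Rightarrow> real^'d) \<Rightarrow> 'd set set
    \<Rightarrow> (nat \<Rightarrow> real) \<Rightarrow> ('d \<Rightarrow> nat \<Rightarrow> real) \<Rightarrow> real" where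
  "J2_GL k n xs P \<alpha> \<beta> = (1 / sqrt (real n)) *
     (\<Sum>g\<in>P. real (card g) * sqrt (\<Sum>a\<in>g. \<Sum>j<n. (gradvec k n xs \<alpha> \<beta> a j)^2))"

definition J2_EN :: "(real^'d::finite \<Rightarrow> real^'d \<Rightarrow> real) \<Rightarrow> nat \<Rightarrow> (nat \<Rightarrow> real^'d) \<Rightarrow> real
    \<Rightarrow> (nat \<Rightarrow> real) \<Rightarrow> ('d \<Rightarrow> nat \<Rightarrow> real) \<Rightarrow> real" where
  "J2_EN k n xs \<mu> \<alpha> \<beta> = (\<mu> / sqrt (real n)) * (\<Sum>a\<in>UNIV. gnorm k n xs \<alpha> \<beta> a)
     + ((1 - \<mu>) / real n) * (\<Sum>a\<in>UNIV. (gnorm k n xs \<alpha> \<beta> a)^2)"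

definition equivalent_problems :: "('h \<Rightarrow> real) \<Rightarrow> ('p \<Rightarrow> 'q \<Rightarrow> real) \<Rightarrow> ('p \<Rightarrow> 'q \<Rightarrow> 'h) \<Rightarrow> bool" where
  "equivalent_problems P Q emb \<longleftrightarrow>
     (INF f. P f) = (INF pq. Q (fst pq) (snd pq)) \<and>
     (\<forall>\<alpha> \<beta>. (\<forall>\<alpha>' \<beta>'. Q \<alpha> \<beta> \<le> Q \<alpha>' \<beta>') \<longleftrightarrow> (\<forall>g. P (emb \<alpha> \<beta>) \<le> P g))"

end

theory Submission
  imports Defs
begin

text \<open>The reproducing properties \<open>\<langle>k\<^sub>x, f\<rangle> = f(x)\<close> and \<open>\<langle>\<partial>\<^sub>a k\<^sub>x, f\<rangle> = \<partial>\<^sub>a f(x)\<close> turn the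
  values and partial derivatives of \<open>f\<^sub>\<alpha>\<^sub>,\<^sub>\<beta>\<close> at the data into the vectors \<open>K\<alpha> + D\<^sup>T\<beta>\<close> and
  \<open>D\<^sup>a\<alpha> + L\<^sup>a\<beta>\<close>, which gives the three identities. For the equivalence, project an arbitrary \<open>f\<close>
  orthogonally onto the finite-dimensional span of the \<open>k\<^sub>x\<^sub>i\<close> and \<open>\<partial>\<^sub>a k\<^sub>x\<^sub>i\<close>: the projection is
  some \<open>f\<^sub>\<alpha>\<^sub>,\<^sub>\<beta>\<close>, it has the same values and partial derivatives at the data (these are inner
  products with the spanning vectors) and no larger norm, so it does not increase the objective.\<close>

lemma exists_orthogonal_projection_finite_span:
  fixes f :: "'a::real_inner"
  assumes "finite S"
  shows "\<exists>p\<in>span S. \<forall>s\<in>S. orthogonal s (f - p)"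
  using assms
proof (induction S arbitrary: f rule: finite_induct)
  case empty
  then show ?case by (auto intro: span_zero)
next
  case (insert v S)
  obtain pv where pv: "pv \<in> span S" "\<forall>s\<in>S. orthogonal s (v - pv)"
    using insert.IH by blast
  obtain pf where pf: "pf \<in> span S" "\<forall>s\<in>S. orthogonal s (f - pf)"
    using insert.IH by blast
  define w where "w = v - pv"
  have w_orth: "orthogonal s w" if "s \<in> span S" for s
    using orthogonal_to_span[OF that, of w] pv(2) orthogonal_commute w_def by blast
  have pf_orth: "orthogonal s (f - pf)" if "s \<in> span S" for s
    using orthogonal_to_span[OF that] pf(2) orthogonal_commute by blast
  \<comment> \<open>Gram--Schmidt: correct \<open>pf\<close> along the component \<open>w\<close> of \<open>v\<close> orthogonal to \<open>span S\<close>.\<close>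
  define p where "p = pf + (inner w f / inner w w) *\<^sub>R w"
  have "p \<in> span (insert v S)"
    unfolding p_def w_def
    using pf(1) pv(1) span_mono[of S "insert v S"]
    by (intro span_add span_scale span_diff) (auto intro: span_base)
  moreover have orth_span_S: "orthogonal s (f - p)" if "s \<in> span S" for s
    using pf_orth[OF that] w_orth[OF that]
    by (simp add: p_def orthogonal_def inner_diff_right inner_add_right)
  moreover have "orthogonal w (f - p)"
  proof (cases "w = 0")
    case False
    have "inner w pf = 0"
      using w_orth[OF pf(1)] by (simp add: orthogonal_def inner_commute)
    with False show ?thesis
      by (simp add: p_def orthogonal_def inner_diff_right inner_add_right)
  qed (simp add: orthogonal_def)
  then have "orthogonal v (f - p)"
    using orth_span_S[OF pv(1)] by (simp add: w_def orthogonal_def inner_diff_left)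
  ultimately show ?case
    by (auto intro: span_base)
qed

lemma orthogonal_projection_norm_le:
  fixes f :: "'a::real_inner"
  assumes "p \<in> span S" and "\<And>s. s \<in> S \<Longrightarrow> orthogonal s (f - p)"
  shows "norm p \<le> norm f"
proof -
  have "orthogonal p (f - p)"
    using orthogonal_to_span[OF assms(1)] assms(2) orthogonal_commute by blast
  then have "(norm f)\<^sup>2 = (norm p)\<^sup>2 + (norm (f - p))\<^sup>2"
    using norm_add_Pythagorean[of p "f - p"] by simp
  then have "(norm p)\<^sup>2 \<le> (norm f)\<^sup>2"
    by simp
  then show ?thesis
    by (rule power2_le_imp_le) simp
qed

lemma partial_cong_open:
  assumes "open X" "x \<in> X" "\<And>y. y \<in> X \<Longrightarrow> g y = h y"
  shows "partial a g x = partial a h x"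
  unfolding partial_def
proof (rule deriv_cong_ev[OF _ refl])
  have "((\<lambda>t::real. x + t *\<^sub>R axis a 1) \<longlongrightarrow> x + 0 *\<^sub>R axis a 1) (nhds 0)"
    by (intro tendsto_intros filterlim_ident)
  then have "((\<lambda>t::real. x + t *\<^sub>R axis a 1) \<longlongrightarrow> x) (nhds 0)"
    by simp
  then have "\<forall>\<^sub>F t in nhds 0. x + t *\<^sub>R axis a 1 \<in> X"
    using topological_tendstoD assms(1,2) by blast
  then show "\<forall>\<^sub>F t in nhds 0. g (x + t *\<^sub>R axis a 1) = h (x + t *\<^sub>R axis a 1)"
    by eventually_elim (simp add: assms(3))
qed

lemma equivalent_problemsI:
  fixes P :: "'h \<Rightarrow> real"
  assumes P_emb: "\<And>\<alpha> \<beta>. P (emb \<alpha> \<beta>) = Q \<alpha> \<beta>"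
    and dominated: "\<And>f. \<exists>\<alpha> \<beta>. P (emb \<alpha> \<beta>) \<le> P f"
    and bounded: "bdd_below (range P)"
  shows "equivalent_problems P Q emb"
proof -
  let ?Q = "\<lambda>pq. Q (fst pq) (snd pq)"
  have Q_eq: "?Q pq = P (emb (fst pq) (snd pq))" for pq
    by (simp add: P_emb)
  have bounded_Q: "bdd_below (range ?Q)"
    using bounded by (auto simp: Q_eq bdd_below_def)
  have "(INF f. P f) \<le> (INF pq. ?Q pq)"
    by (rule cINF_greatest) (auto simp: Q_eq intro: cINF_lower[OF bounded])
  moreover have "(INF pq. ?Q pq) \<le> (INF f. P f)"
  proof (rule cINF_greatest)
    fix f
    obtain \<alpha> \<beta> where "P (emb \<alpha> \<beta>) \<le> P f"
      using dominated by blast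
    moreover have "(INF pq. ?Q pq) \<le> ?Q (\<alpha>, \<beta>)"
      by (rule cINF_lower[OF bounded_Q]) simp
    ultimately show "(INF pq. ?Q pq) \<le> P f"
      by (simp add: P_emb)
  qed simp
  moreover have "(\<forall>\<alpha>' \<beta>'. Q \<alpha> \<beta> \<le> Q \<alpha>' \<beta>') \<longleftrightarrow> (\<forall>g. P (emb \<alpha> \<beta>) \<le> P g)" for \<alpha> \<beta>
    using dominated by (metis P_emb order_trans)
  ultimately show ?thesis
    unfolding equivalent_problems_def by auto
qed

lemma inner_f_ab_left:
  "inner (f_ab kx dk n xs \<alpha> \<beta>) g =
     (\<Sum>i<n. \<alpha> i * inner (kx (xs i)) g) + (\<Sum>i<n. \<Sum>a\<in>UNIV. \<beta> a i * inner (dk a (xs i)) g)"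
  by (simp add: f_ab_def inner_add_left inner_sum_left)

lemma inner_f_ab_right:
  "inner g (f_ab kx dk n xs \<alpha> \<beta>) =
     (\<Sum>i<n. \<alpha> i * inner g (kx (xs i))) + (\<Sum>i<n. \<Sum>a\<in>UNIV. \<beta> a i * inner g (dk a (xs i)))"
  by (simp add: f_ab_def inner_add_right inner_sum_right)

lemma subspace_range_f_ab: "subspace (range (case_prod (f_ab kx dk n xs)))"
  unfolding subspace_def
proof (intro conjI ballI allI)
  have "f_ab kx dk n xs (\<lambda>i. 0) (\<lambda>a i. 0) = 0"
    by (simp add: f_ab_def)
  then show "0 \<in> range (case_prod (f_ab kx dk n xs))"
    by (metis case_prod_conv rangeI)
next
  fix x y
  assume "x \<in> range (case_prod (f_ab kx dk n xs))" "y \<in> range (case_prod (f_ab kx dk n xs))"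
  then obtain \<alpha> \<beta> \<alpha>' \<beta>' where "x = f_ab kx dk n xs \<alpha> \<beta>" "y = f_ab kx dk n xs \<alpha>' \<beta>'"
    by auto
  then have "x + y = f_ab kx dk n xs (\<lambda>i. \<alpha> i + \<alpha>' i) (\<lambda>a i. \<beta> a i + \<beta>' a i)"
    by (simp add: f_ab_def scaleR_add_left sum.distrib algebra_simps)
  then show "x + y \<in> range (case_prod (f_ab kx dk n xs))"
    by (metis case_prod_conv rangeI)
next
  fix c x
  assume "x \<in> range (case_prod (f_ab kx dk n xs))"
  then obtain \<alpha> \<beta> where "x = f_ab kx dk n xs \<alpha> \<beta>"
    by auto
  then have "c *\<^sub>R x = f_ab kx dk n xs (\<lambda>i. c * \<alpha> i) (\<lambda>a i. c * \<beta> a i)"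
    by (simp add: f_ab_def scaleR_add_right scaleR_sum_right)
  then show "c *\<^sub>R x \<in> range (case_prod (f_ab kx dk n xs))"
    by (metis case_prod_conv rangeI)
qed

lemma kx_in_range_f_ab:
  assumes "i < n"
  shows "kx (xs i) \<in> range (case_prod (f_ab kx dk n xs))"
proof -
  have "kx (xs i) = f_ab kx dk n xs (\<lambda>j. if j = i then 1 else 0) (\<lambda>a j. 0)"
    using assms by (simp add: f_ab_def if_distrib[of "\<lambda>c. c *\<^sub>R _"] cong: if_cong)
  then show ?thesis
    by (metis case_prod_conv rangeI)
qed

lemma dk_in_range_f_ab:
  assumes "i < n"
  shows "dk b (xs i) \<in> range (case_prod (f_ab kx dk n xs))"
proof -
  have "(\<Sum>j<n. \<Sum>a\<in>UNIV. (if a = b \<and> j = i then 1 else 0) *\<^sub>R dk a (xs j))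
      = (\<Sum>j<n. if j = i then dk b (xs i) else 0)"
    by (intro sum.cong refl) (auto simp: if_distrib[of "\<lambda>c. c *\<^sub>R _"] cong: if_cong)
  then have "dk b (xs i) = f_ab kx dk n xs (\<lambda>j. 0) (\<lambda>a j. if a = b \<and> j = i then 1 else 0)"
    using assms by (simp add: f_ab_def)
  then show ?thesis
    by (metis case_prod_conv rangeI)
qed

locale rkhs_with_derivatives =
  fixes X :: "(real^'d::finite) set"
    and k :: "real^'d \<Rightarrow> real^'d \<Rightarrow> real"
    and ev :: "'h::real_inner \<Rightarrow> real^'d \<Rightarrow> real"
    and kx :: "real^'d \<Rightarrow> 'h"
    and dk :: "'d \<Rightarrow> real^'d \<Rightarrow> 'h"
  assumes open_domain: "open X"
    and kernel_symmetric: "\<And>s r. s \<in> X \<Longrightarrow> r \<in> X \<Longrightarrow> k s r = k r s"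
    and rkhs: "is_rkhs X k ev kx dk"
begin

lemma inner_kx: "x \<in> X \<Longrightarrow> inner (kx x) f = ev f x"
  using rkhs by (simp add: is_rkhs_def)

lemma inner_dk: "x \<in> X \<Longrightarrow> inner (dk a x) f = partial a (ev f) x"
  using rkhs by (simp add: is_rkhs_def)

lemma inner_kx_kx: "x \<in> X \<Longrightarrow> x' \<in> X \<Longrightarrow> inner (kx x) (kx x') = k x x'"
  using rkhs kernel_symmetric by (simp add: is_rkhs_def inner_kx)

lemma inner_kx_dk: "x \<in> X \<Longrightarrow> x' \<in> X \<Longrightarrow> inner (kx x') (dk a x) = partial a (\<lambda>s. k s x') x"
  using rkhs by (simp add: is_rkhs_def inner_kx)

lemma inner_dk_dk:
  assumes "x \<in> X" "x' \<in> X"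
  shows "inner (dk a x) (dk b x') = partial a (\<lambda>s. partial b (\<lambda>r. k s r) x') x"
proof -
  have ev_dk: "ev (dk b x') s = partial b (\<lambda>r. k s r) x'" if "s \<in> X" for s
  proof -
    have "ev (dk b x') s = partial b (\<lambda>r. k r s) x'"
      using rkhs assms(2) that by (simp add: is_rkhs_def)
    also have "\<dots> = partial b (\<lambda>r. k s r) x'"
      using assms(2) that kernel_symmetric by (intro partial_cong_open[OF open_domain]) auto
    finally show ?thesis .
  qed
  have "inner (dk a x) (dk b x') = partial a (ev (dk b x')) x"
    using assms(1) by (rule inner_dk)
  also have "\<dots> = partial a (\<lambda>s. partial b (\<lambda>r. k s r) x') x"
    using ev_dk by (rule partial_cong_open[OF open_domain assms(1)])
  finally show ?thesis .
qed

context
  fixes n :: nat and xs :: "nat \<Rightarrow> real^'d"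
  assumes data_in_domain: "\<And>i. i < n \<Longrightarrow> xs i \<in> X"
begin

lemma ev_f_ab:
  assumes "j < n"
  shows "ev (f_ab kx dk n xs \<alpha> \<beta>) (xs j) =
    (\<Sum>i<n. Kmat k xs j i * \<alpha> i) + (\<Sum>a\<in>UNIV. \<Sum>i<n. Dmat k xs a i j * \<beta> a i)"
proof -
  have "ev (f_ab kx dk n xs \<alpha> \<beta>) (xs j) = inner (kx (xs j)) (f_ab kx dk n xs \<alpha> \<beta>)"
    using assms data_in_domain by (simp add: inner_kx)
  also have "\<dots> = (\<Sum>i<n. Kmat k xs j i * \<alpha> i) + (\<Sum>i<n. \<Sum>a\<in>UNIV. Dmat k xs a i j * \<beta> a i)"
    unfolding inner_f_ab_right using assms data_in_domain
    by (intro arg_cong2[where f="(+)"] sum.cong refl)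
      (simp_all add: Kmat_def Dmat_def inner_kx_kx inner_kx_dk)
  finally show ?thesis
    using sum.swap[of "\<lambda>i a. Dmat k xs a i j * \<beta> a i" UNIV "{..<n}"] by simp
qed

lemma partial_f_ab:
  assumes "j < n"
  shows "partial a (ev (f_ab kx dk n xs \<alpha> \<beta>)) (xs j) = gradvec k n xs \<alpha> \<beta> a j"
proof -
  have "partial a (ev (f_ab kx dk n xs \<alpha> \<beta>)) (xs j) = inner (dk a (xs j)) (f_ab kx dk n xs \<alpha> \<beta>)"
    using assms data_in_domain by (simp add: inner_dk)
  also have "\<dots> = (\<Sum>i<n. Dmat k xs a j i * \<alpha> i) + (\<Sum>i<n. \<Sum>b\<in>UNIV. Lmat k xs a b j i * \<beta> b i)"
    unfolding inner_f_ab_right using assms data_in_domain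
    by (intro arg_cong2[where f="(+)"] sum.cong refl)
      (simp_all add: Dmat_def Lmat_def inner_commute[of "dk a (xs j)" "kx _"] inner_kx_dk inner_dk_dk)
  finally show ?thesis
    using sum.swap[of "\<lambda>i b. Lmat k xs a b j i * \<beta> b i" UNIV "{..<n}"] by (simp add: gradvec_def)
qed


lemma emp_loss_f_ab: "emp_loss ev n xs ys (f_ab kx dk n xs \<alpha> \<beta>) = J1 k n xs ys \<alpha> \<beta>"
  unfolding emp_loss_def J1_def
  by (intro arg_cong2[where f="(/)"] sum.cong refl) (simp add: ev_f_ab diff_diff_eq)

lemma emp_pnorm_f_ab_squared:
  "(emp_pnorm ev n xs a (f_ab kx dk n xs \<alpha> \<beta>))\<^sup>2 = (\<Sum>j<n. (gradvec k n xs \<alpha> \<beta> a j)\<^sup>2) / real n"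
  by (simp add: emp_pnorm_def partial_f_ab sum_nonneg)

lemma emp_pnorm_f_ab:
  "emp_pnorm ev n xs a (f_ab kx dk n xs \<alpha> \<beta>) = gnorm k n xs \<alpha> \<beta> a / sqrt (real n)"
  by (simp add: emp_pnorm_def gnorm_def partial_f_ab real_sqrt_divide)

lemma R_L_f_ab: "R_L ev n xs (f_ab kx dk n xs \<alpha> \<beta>) = J2_L k n xs \<alpha> \<beta>"
  by (simp add: R_L_def J2_L_def emp_pnorm_f_ab sum_divide_distrib)

lemma R_GL_f_ab: "R_GL ev n xs P (f_ab kx dk n xs \<alpha> \<beta>) = J2_GL k n xs P \<alpha> \<beta>"
  by (simp add: R_GL_def J2_GL_def emp_pnorm_f_ab_squared sum_distrib_left
      sum_divide_distrib[symmetric] real_sqrt_divide)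

lemma R_EN_f_ab: "R_EN ev n xs \<mu> (f_ab kx dk n xs \<alpha> \<beta>) = J2_EN k n xs \<mu> \<alpha> \<beta>"
  by (simp add: R_EN_def J2_EN_def emp_pnorm_f_ab power_divide flip: sum_divide_distrib)

lemma norm_f_ab_squared: "(norm (f_ab kx dk n xs \<alpha> \<beta>))\<^sup>2 = J3 k n xs \<alpha> \<beta>"
proof -
  let ?f = "f_ab kx dk n xs \<alpha> \<beta>"
  let ?K = "Kmat k xs" and ?D = "Dmat k xs" and ?L = "Lmat k xs"
  \<comment> \<open>Expanding only the left factor, the reproducing properties evaluate the right one.\<close>
  have "(norm ?f)\<^sup>2 = (\<Sum>i<n. \<alpha> i * ev ?f (xs i)) + (\<Sum>i<n. \<Sum>a\<in>UNIV. \<beta> a i * partial a (ev ?f) (xs i))"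
    unfolding power2_norm_eq_inner inner_f_ab_left using data_in_domain
    by (simp add: inner_kx inner_dk)
  also have "\<dots> = (\<Sum>i<n. \<alpha> i * (\<Sum>j<n. ?K i j * \<alpha> j))
      + (\<Sum>i<n. \<alpha> i * (\<Sum>a\<in>UNIV. \<Sum>j<n. ?D a j i * \<beta> a j))
      + (\<Sum>i<n. \<Sum>a\<in>UNIV. \<beta> a i * (\<Sum>j<n. ?D a i j * \<alpha> j))
      + (\<Sum>i<n. \<Sum>a\<in>UNIV. \<beta> a i * (\<Sum>b\<in>UNIV. \<Sum>j<n. ?L a b i j * \<beta> b j))"
    by (simp add: ev_f_ab partial_f_ab gradvec_def distrib_left sum.distrib)
  also have "\<dots> = J3 k n xs \<alpha> \<beta>"
  proof -
    have "(\<Sum>i<n. \<alpha> i * (\<Sum>j<n. ?K i j * \<alpha> j)) = (\<Sum>i<n. \<Sum>j<n. \<alpha> i * ?K i j * \<alpha> j)"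
      by (simp add: sum_distrib_left mult.assoc)
    moreover have "(\<Sum>i<n. \<alpha> i * (\<Sum>a\<in>UNIV. \<Sum>j<n. ?D a j i * \<beta> a j))
        = (\<Sum>a\<in>UNIV. \<Sum>i<n. (\<Sum>j<n. ?D a i j * \<alpha> j) * \<beta> a i)"
    proof -
      have "(\<Sum>i<n. \<alpha> i * (\<Sum>a\<in>UNIV. \<Sum>j<n. ?D a j i * \<beta> a j))
          = (\<Sum>i<n. \<Sum>a\<in>UNIV. \<Sum>j<n. \<alpha> i * (?D a j i * \<beta> a j))"
        by (simp add: sum_distrib_left)
      also have "\<dots> = (\<Sum>a\<in>UNIV. \<Sum>i<n. \<Sum>j<n. \<alpha> i * (?D a j i * \<beta> a j))"
        by (rule sum.swap)
      also have "\<dots> = (\<Sum>a\<in>UNIV. \<Sum>j<n. \<Sum>i<n. \<alpha> i * (?D a j i * \<beta> a j))"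
        by (rule sum.cong[OF refl], rule sum.swap)
      also have "\<dots> = (\<Sum>a\<in>UNIV. \<Sum>j<n. (\<Sum>i<n. ?D a j i * \<alpha> i) * \<beta> a j)"
        by (simp add: sum_distrib_left sum_distrib_right mult_ac)
      finally show ?thesis .
    qed
    moreover have "(\<Sum>i<n. \<Sum>a\<in>UNIV. \<beta> a i * (\<Sum>j<n. ?D a i j * \<alpha> j))
        = (\<Sum>a\<in>UNIV. \<Sum>i<n. (\<Sum>j<n. ?D a i j * \<alpha> j) * \<beta> a i)"
      by (subst sum.swap) (simp add: mult.commute)
    moreover have "(\<Sum>i<n. \<Sum>a\<in>UNIV. \<beta> a i * (\<Sum>b\<in>UNIV. \<Sum>j<n. ?L a b i j * \<beta> b j))
        = (\<Sum>a\<in>UNIV. \<Sum>i<n. \<Sum>b\<in>UNIV. \<Sum>j<n. \<beta> a i * ?L a b i j * \<beta> b j)"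
      by (subst sum.swap) (simp add: sum_distrib_left mult.assoc)
    ultimately show ?thesis
      by (simp add: J3_def)
  qed
  finally show ?thesis .
qed

lemma f_ab_representer:
  "\<exists>\<alpha> \<beta>. (\<forall>j<n. ev (f_ab kx dk n xs \<alpha> \<beta>) (xs j) = ev f (xs j))
     \<and> (\<forall>a j. j < n \<longrightarrow> partial a (ev (f_ab kx dk n xs \<alpha> \<beta>)) (xs j) = partial a (ev f) (xs j))
     \<and> norm (f_ab kx dk n xs \<alpha> \<beta>) \<le> norm f"
proof -
  define G where "G = kx ` xs ` {..<n} \<union> (\<lambda>(a, i). dk a (xs i)) ` (UNIV \<times> {..<n})"
  have "finite G"
    by (simp add: G_def)
  then obtain p where p: "p \<in> span G" "\<And>s. s \<in> G \<Longrightarrow> orthogonal s (f - p)"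
    using exists_orthogonal_projection_finite_span by blast
  have "G \<subseteq> range (case_prod (f_ab kx dk n xs))"
    by (auto simp: G_def kx_in_range_f_ab dk_in_range_f_ab)
  then have "span G \<subseteq> range (case_prod (f_ab kx dk n xs))"
    by (rule span_minimal[OF _ subspace_range_f_ab])
  then obtain \<alpha> \<beta> where p_eq: "p = f_ab kx dk n xs \<alpha> \<beta>"
    using p(1) by auto
  have "ev p (xs j) = ev f (xs j)" if "j < n" for j
  proof -
    have "orthogonal (kx (xs j)) (f - p)"
      using p(2) that by (simp add: G_def)
    then show ?thesis
      using that data_in_domain by (simp add: orthogonal_def inner_diff_right inner_kx)
  qed
  moreover have "partial a (ev p) (xs j) = partial a (ev f) (xs j)" if "j < n" for a j
  proof -
    have "orthogonal (dk a (xs j)) (f - p)"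
      using p(2) that by (force simp: G_def)
    then show ?thesis
      using that data_in_domain by (simp add: orthogonal_def inner_diff_right inner_dk)
  qed
  moreover have "norm p \<le> norm f"
    using orthogonal_projection_norm_le p by blast
  ultimately show ?thesis
    unfolding p_eq by blast
qed

lemma equivalent_regularized_problems:
  fixes R :: "'h \<Rightarrow> real"
  assumes "0 \<le> \<tau>" "0 \<le> \<nu>"
    and R_nonneg: "\<And>f. 0 \<le> R f"
    and R_cong: "\<And>f g. (\<And>a. emp_pnorm ev n xs a f = emp_pnorm ev n xs a g) \<Longrightarrow> R f = R g"
    and R_f_ab: "\<And>\<alpha> \<beta>. R (f_ab kx dk n xs \<alpha> \<beta>) = J2 \<alpha> \<beta>"
  shows "equivalent_problems
    (\<lambda>f. emp_loss ev n xs ys f + \<tau> * R f + \<nu> * (norm f)\<^sup>2)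
    (\<lambda>\<alpha> \<beta>. J1 k n xs ys \<alpha> \<beta> + \<tau> * J2 \<alpha> \<beta> + \<nu> * J3 k n xs \<alpha> \<beta>)
    (f_ab kx dk n xs)"
proof (rule equivalent_problemsI)
  fix f
  obtain \<alpha> \<beta> where ev_eq: "\<forall>j<n. ev (f_ab kx dk n xs \<alpha> \<beta>) (xs j) = ev f (xs j)"
    and partial_eq: "\<forall>a j. j < n \<longrightarrow> partial a (ev (f_ab kx dk n xs \<alpha> \<beta>)) (xs j) = partial a (ev f) (xs j)"
    and norm_le: "norm (f_ab kx dk n xs \<alpha> \<beta>) \<le> norm f"
    using f_ab_representer by blast
  have "emp_loss ev n xs ys (f_ab kx dk n xs \<alpha> \<beta>) = emp_loss ev n xs ys f"
    unfolding emp_loss_def using ev_eq by (intro arg_cong2[where f="(/)"] sum.cong refl) simp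
  moreover have "R (f_ab kx dk n xs \<alpha> \<beta>) = R f"
  proof (rule R_cong)
    show "emp_pnorm ev n xs a (f_ab kx dk n xs \<alpha> \<beta>) = emp_pnorm ev n xs a f" for a
      unfolding emp_pnorm_def using partial_eq
      by (intro arg_cong[where f=sqrt] arg_cong2[where f="(/)"] sum.cong refl) simp
  qed
  moreover have "\<nu> * (norm (f_ab kx dk n xs \<alpha> \<beta>))\<^sup>2 \<le> \<nu> * (norm f)\<^sup>2"
    using norm_le assms(2) by (simp add: mult_left_mono power_mono)
  ultimately show "\<exists>\<alpha> \<beta>. emp_loss ev n xs ys (f_ab kx dk n xs \<alpha> \<beta>) + \<tau> * R (f_ab kx dk n xs \<alpha> \<beta>)
      + \<nu> * (norm (f_ab kx dk n xs \<alpha> \<beta>))\<^sup>2 \<le> emp_loss ev n xs ys f + \<tau> * R f + \<nu> * (norm f)\<^sup>2"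
    by (intro exI[of _ \<alpha>] exI[of _ \<beta>]) simp
next
  show "bdd_below (range (\<lambda>f. emp_loss ev n xs ys f + \<tau> * R f + \<nu> * (norm f)\<^sup>2))"
    using assms(1,2) R_nonneg
    by (intro bdd_belowI[where m=0]) (auto simp: emp_loss_def sum_nonneg)
qed (simp add: emp_loss_f_ab R_f_ab norm_f_ab_squared)

end

end

theorem proposition2:
  fixes X :: "(real^'d::finite) set"
    and k :: "real^'d \<Rightarrow> real^'d \<Rightarrow> real"
    and ev :: "'h::{real_inner,complete_space} \<Rightarrow> real^'d \<Rightarrow> real"
    and kx :: "real^'d \<Rightarrow> 'h"
    and dk :: "'d \<Rightarrow> real^'d \<Rightarrow> 'h"
    and n :: nat
    and xs :: "nat \<Rightarrow> real^'d"
    and ys :: "nat \<Rightarrow> real"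
    and P :: "'d set set"
    and \<mu> \<tau> \<nu> :: real
  assumes "open X"
    and "sym_psd_kernel X k"
    and "C2_on (X \<times> X) (\<lambda>(s, r). k s r)"
    and "is_rkhs X k ev kx dk"
    and "\<forall>i<n. xs i \<in> X"
    and "partition_on UNIV P"
    and "0 \<le> \<mu>" and "\<mu> \<le> 1"
    and "0 \<le> \<tau>" and "0 \<le> \<nu>"
  shows "(\<forall>\<alpha> \<beta>. let f = f_ab kx dk n xs \<alpha> \<beta> in
            emp_loss ev n xs ys f = J1 k n xs ys \<alpha> \<beta> \<and>
            R_L ev n xs f = J2_L k n xs \<alpha> \<beta> \<and>
            R_GL ev n xs P f = J2_GL k n xs P \<alpha> \<beta> \<and>
            R_EN ev n xs \<mu> f = J2_EN k n xs \<mu> \<alpha> \<beta> \<and>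
            (norm f)^2 = J3 k n xs \<alpha> \<beta>)
    \<and> equivalent_problems
        (\<lambda>f. emp_loss ev n xs ys f + \<tau> * R_L ev n xs f + \<nu> * (norm f)^2)
        (\<lambda>\<alpha> \<beta>. J1 k n xs ys \<alpha> \<beta> + \<tau> * J2_L k n xs \<alpha> \<beta> + \<nu> * J3 k n xs \<alpha> \<beta>)
        (f_ab kx dk n xs)
    \<and> equivalent_problems
        (\<lambda>f. emp_loss ev n xs ys f + \<tau> * R_GL ev n xs P f + \<nu> * (norm f)^2)
        (\<lambda>\<alpha> \<beta>. J1 k n xs ys \<alpha> \<beta> + \<tau> * J2_GL k n xs P \<alpha> \<beta> + \<nu> * J3 k n xs \<alpha> \<beta>)
        (f_ab kx dk n xs)
    \<and> equivalent_problems
        (\<lambda>f. emp_loss ev n xs ys f + \<tau> * R_EN ev n xs \<mu> f + \<nu> * (norm f)^2)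
        (\<lambda>\<alpha> \<beta>. J1 k n xs ys \<alpha> \<beta> + \<tau> * J2_EN k n xs \<mu> \<alpha> \<beta> + \<nu> * J3 k n xs \<alpha> \<beta>)
        (f_ab kx dk n xs)"
proof -
  \<comment> \<open>Of the kernel hypotheses only symmetry is needed: the \<open>C\<^sup>2\<close> regularity that puts
    \<open>\<partial>\<^sub>a k\<^sub>x\<close> into \<open>\<F>\<close> is already part of \<open>is_rkhs\<close>.\<close>
  interpret rkhs_with_derivatives X k ev kx dk
    using assms(1,2,4) by unfold_locales (auto simp: sym_psd_kernel_def)
  have data: "\<And>i. i < n \<Longrightarrow> xs i \<in> X"
    using assms(5) by blast
  have emp_pnorm_nonneg: "0 \<le> emp_pnorm ev n xs a f" for a f
    by (simp add: emp_pnorm_def sum_nonneg)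
  have "0 \<le> R_L ev n xs f" "0 \<le> R_GL ev n xs P f" "0 \<le> R_EN ev n xs \<mu> f" for f
    using assms(7,8) by (simp_all add: R_L_def R_GL_def R_EN_def emp_pnorm_nonneg sum_nonneg)
  then show ?thesis
    using emp_loss_f_ab[OF data] R_L_f_ab[OF data] R_GL_f_ab[OF data] R_EN_f_ab[OF data]
      norm_f_ab_squared[OF data]
    by (auto simp: Let_def R_L_def R_GL_def R_EN_def
        intro!: equivalent_regularized_problems[OF data assms(9,10)])
qed

end
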